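(* Let $X=\{a,\dots,b\}\subseteq\mathbb{N}$, let $f^\alpha:\mathcal{P}^n\to X$ be a median voter scheme with fixed ballots $\alpha_1\le\dots\le\alpha_{n-1}$ in $X$, and let $i\in N$. Then $x\in V_i$ if and only if $x<\alpha_1$ or $x>\alpha_{n-1}$.
   Context: $N=\{1,\dots,n\}$, $n\ge2$; $X=\{a,a+1,\dots,b\}$, $|X|\ge2$; $\mathcal{P}$ all strict linear orders on $X$; $t(P_i)$ the top of $P_i$. $f^\alpha(P)=\mathrm{med}\{t(P_1),\dots,t(P_n),\alpha_1,\dots,\alpha_{n-1}\}$. Option set $O(P_i)=\{f^\alpha(P_i,P_{-i}):P_{-i}\in\mathcal{P}^{n-1}\}$. Agent $i$ vetoes $x$ via $P_i$ if $x\notin O(P_i)$; $V_i$ is the set of alternatives that $i$ vetoes via some preference $P_i\in\mathcal{P}$. *)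

theory Defs
  imports Main "HOL-Library.Multiset"
begin

text \<open>Alternatives are natural numbers; X = {a..b}. A preference is a strict linear
order P on X, with (x,y) \<in> P meaning x is strictly preferred to y.\<close>

definition prefs :: "nat set \<Rightarrow> (nat \<times> nat) set set" where
  "prefs X = {P. strict_linear_order_on X P \<and> P \<subseteq> X \<times> X}"

definition top_pref :: "nat set \<Rightarrow> (nat \<times> nat) set \<Rightarrow> nat" where
  "top_pref X P = (THE x. x \<in> X \<and> (\<forall>y\<in>X. y \<noteq> x \<longrightarrow> (x, y) \<in> P))"

definition med :: "nat multiset \<Rightarrow> nat" where
  "med M = sorted_list_of_multiset M ! (size M div 2)"

definition mvs :: "nat \<Rightarrow> nat set \<Rightarrow> (nat \<Rightarrow> nat) \<Rightarrow> (nat \<Rightarrow> (nat \<times> nat) set) \<Rightarrow> nat" where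
  "mvs n X alpha P = med (image_mset (\<lambda>j. top_pref X (P j)) (mset_set {1..n})
                        + image_mset alpha (mset_set {1..n-1}))"

definition profiles :: "nat \<Rightarrow> nat set \<Rightarrow> (nat \<Rightarrow> (nat \<times> nat) set) set" where
  "profiles n X = {P. \<forall>j\<in>{1..n}. P j \<in> prefs X}"

definition option_set :: "nat \<Rightarrow> nat set \<Rightarrow> (nat \<Rightarrow> nat) \<Rightarrow> nat \<Rightarrow> (nat \<times> nat) set \<Rightarrow> nat set" where
  "option_set n X alpha i Pi = {mvs n X alpha Q | Q. Q \<in> profiles n X \<and> Q i = Pi}"

definition veto_set :: "nat \<Rightarrow> nat set \<Rightarrow> (nat \<Rightarrow> nat) \<Rightarrow> nat \<Rightarrow> nat set" where
  "veto_set n X alpha i = {x \<in> X. \<exists>Pi \<in> prefs X. x \<notin> option_set n X alpha i Pi}"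

end

theory Submission
  imports Defs
begin

text \<open>The outcome of the scheme is the \<open>n\<close>-th smallest of the \<open>2n - 1\<close> numbers formed by
  the \<open>n\<close> reported tops and the \<open>n - 1\<close> fixed ballots. If \<open>alpha 1 \<le> x \<le> alpha (n - 1)\<close>,
  the other \<open>n - 1\<close> agents reporting top \<open>x\<close> make \<open>x\<close> the median whatever agent \<open>i\<close>
  reports, so \<open>i\<close> cannot veto \<open>x\<close>. If \<open>x < alpha 1\<close>, agent \<open>i\<close> reporting top \<open>b\<close>
  leaves at most the \<open>n - 1\<close> other tops below \<open>alpha 1\<close>, so every outcome is at least
  \<open>alpha 1 > x\<close>; symmetrically for \<open>x > alpha (n - 1)\<close> with top \<open>a\<close>.\<close>

lemma filter_eq_takeWhile_if_sorted:
  fixes xs :: "'a::linorder list"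
  assumes "sorted xs" and down: "\<And>x y. P y \<Longrightarrow> x \<le> y \<Longrightarrow> P x"
  shows "filter P xs = takeWhile P xs"
proof (rule takeWhile_eq_filter[symmetric])
  fix x assume x: "x \<in> set (dropWhile P xs)"
  then obtain d ds where d: "dropWhile P xs = d # ds"
    by (cases "dropWhile P xs") auto
  have "\<not> P d" using hd_dropWhile[of P xs] d by simp
  moreover have "d \<le> x" using sorted_dropWhile[OF \<open>sorted xs\<close>, of P] x d by auto
  ultimately show "\<not> P x" using down by blast
qed

lemma sorted_nth_iff_less_length_filter:
  fixes xs :: "'a::linorder list"
  assumes "sorted xs" "k < length xs" and down: "\<And>x y. P y \<Longrightarrow> x \<le> y \<Longrightarrow> P x"
  shows "P (xs ! k) \<longleftrightarrow> k < length (filter P xs)"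
proof -
  have "P (xs ! k) \<longleftrightarrow> k < length (takeWhile P xs)"
  proof
    assume "P (xs ! k)"
    then have "P (xs ! j)" if "j < Suc k" for j
      using down sorted_nth_mono[OF \<open>sorted xs\<close>, of j k] that assms(2) by simp
    then show "k < length (takeWhile P xs)"
      using length_takeWhile_less_P_nth[of "Suc k" P xs] assms(2) by simp
  next
    assume "k < length (takeWhile P xs)"
    then show "P (xs ! k)"
      by (metis nth_mem set_takeWhileD takeWhile_nth)
  qed
  then show ?thesis
    using filter_eq_takeWhile_if_sorted[OF \<open>sorted xs\<close> down] by simp
qed

lemma sorted_list_of_multiset_nth_iff:
  fixes M :: "'a::linorder multiset"
  assumes "k < size M" and "\<And>x y. P y \<Longrightarrow> x \<le> y \<Longrightarrow> P x"
  shows "P (sorted_list_of_multiset M ! k) \<longleftrightarrow> k < size (filter_mset P M)"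
proof -
  have "size (filter_mset P M) = length (filter P (sorted_list_of_multiset M))"
    by (metis mset_filter mset_sorted_list_of_multiset size_mset)
  then show ?thesis
    using sorted_nth_iff_less_length_filter[of "sorted_list_of_multiset M" k P] assms
    by (metis mset_sorted_list_of_multiset size_mset sorted_sorted_list_of_multiset)
qed

definition mvs_votes :: "nat \<Rightarrow> nat set \<Rightarrow> (nat \<Rightarrow> nat) \<Rightarrow> (nat \<Rightarrow> (nat \<times> nat) set) \<Rightarrow> nat multiset"
  where "mvs_votes n X alpha Q =
    image_mset (\<lambda>j. top_pref X (Q j)) (mset_set {1..n}) + image_mset alpha (mset_set {1..n-1})"

lemma size_mvs_votes: "size (mvs_votes n X alpha Q) = n + (n - 1)"
  by (simp add: mvs_votes_def)

lemma size_filter_mvs_votes: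
  "size (filter_mset P (mvs_votes n X alpha Q)) =
    card {j\<in>{1..n}. P (top_pref X (Q j))} + card {k\<in>{1..n-1}. P (alpha k)}"
  by (simp add: mvs_votes_def filter_mset_image_mset filter_mset_mset_set)

lemma mvs_eq_nth_mvs_votes:
  assumes "1 \<le> n"
  shows "mvs n X alpha Q = sorted_list_of_multiset (mvs_votes n X alpha Q) ! (n - 1)"
proof -
  have "(n + (n - 1)) div 2 = n - 1" using assms by presburger
  then show ?thesis unfolding mvs_def med_def mvs_votes_def[symmetric] size_mvs_votes by simp
qed

lemma mvs_le_iff:
  assumes "1 \<le> n"
  shows "mvs n X alpha Q \<le> m \<longleftrightarrow>
    n \<le> card {j\<in>{1..n}. top_pref X (Q j) \<le> m} + card {k\<in>{1..n-1}. alpha k \<le> m}"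
  using sorted_list_of_multiset_nth_iff[of "n - 1" "mvs_votes n X alpha Q" "\<lambda>y. y \<le> m"] assms
  by (auto simp: mvs_eq_nth_mvs_votes size_mvs_votes size_filter_mvs_votes)

lemma le_mvs_iff:
  assumes "1 \<le> n"
  shows "m \<le> mvs n X alpha Q \<longleftrightarrow>
    card {j\<in>{1..n}. top_pref X (Q j) < m} + card {k\<in>{1..n-1}. alpha k < m} < n"
proof -
  have "mvs n X alpha Q < m \<longleftrightarrow> n - 1 < size (filter_mset (\<lambda>y. y < m) (mvs_votes n X alpha Q))"
    using sorted_list_of_multiset_nth_iff[of "n - 1" "mvs_votes n X alpha Q" "\<lambda>y. y < m"] assms
    by (simp add: mvs_eq_nth_mvs_votes size_mvs_votes)
  then show ?thesis
    using assms unfolding size_filter_mvs_votes by linarith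
qed

lemma le_mvs_if_voter_and_ballots_ge:
  assumes "i \<in> {1..n}" "m \<le> top_pref X (Q i)" "\<forall>k\<in>{1..n-1}. m \<le> alpha k"
  shows "m \<le> mvs n X alpha Q"
proof -
  have "card {j\<in>{1..n}. top_pref X (Q j) < m} \<le> card ({1..n} - {i})"
    using assms(2) by (intro card_mono) auto
  then have "card {j\<in>{1..n}. top_pref X (Q j) < m} \<le> n - 1" using assms(1) by simp
  moreover have "{k\<in>{1..n-1}. alpha k < m} = {}" using assms(3) by force
  then have "card {k\<in>{1..n-1}. alpha k < m} = 0" by (simp only: card.empty)
  moreover have "1 \<le> n" using assms(1) by simp
  ultimately show ?thesis by (simp only: le_mvs_iff)
qed

lemma mvs_le_if_voter_and_ballots_le:
  assumes "i \<in> {1..n}" "top_pref X (Q i) \<le> m" "\<forall>k\<in>{1..n-1}. alpha k \<le> m"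
  shows "mvs n X alpha Q \<le> m"
proof -
  have "card {i} \<le> card {j\<in>{1..n}. top_pref X (Q j) \<le> m}"
    using assms(1,2) by (intro card_mono) auto
  then have "1 \<le> card {j\<in>{1..n}. top_pref X (Q j) \<le> m}" by simp
  moreover have "{k\<in>{1..n-1}. alpha k \<le> m} = {1..n-1}" using assms(3) by force
  then have "card {k\<in>{1..n-1}. alpha k \<le> m} = n - 1" by simp
  moreover have "1 \<le> n" using assms(1) by simp
  ultimately show ?thesis by (simp only: mvs_le_iff)
qed

lemma mvs_eq_if_others_agree:
  assumes "i \<in> {1..n}" "\<forall>j\<in>{1..n} - {i}. top_pref X (Q j) = x"
    and "lo \<in> {1..n-1}" "alpha lo \<le> x" "hi \<in> {1..n-1}" "x \<le> alpha hi"
  shows "mvs n X alpha Q = x"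
proof (rule antisym)
  have "card ({1..n} - {i}) \<le> card {j\<in>{1..n}. top_pref X (Q j) \<le> x}"
    using assms(2) by (intro card_mono) auto
  then have "n - 1 \<le> card {j\<in>{1..n}. top_pref X (Q j) \<le> x}" using assms(1) by simp
  moreover have "card {lo} \<le> card {k\<in>{1..n-1}. alpha k \<le> x}"
    using assms(3,4) by (intro card_mono) auto
  then have "1 \<le> card {k\<in>{1..n-1}. alpha k \<le> x}" by simp
  moreover have "1 \<le> n" using assms(1) by simp
  ultimately show "mvs n X alpha Q \<le> x" by (simp only: mvs_le_iff)
next
  have "card {j\<in>{1..n}. top_pref X (Q j) < x} \<le> card {i}"
    using assms(2) by (intro card_mono) auto
  then have "card {j\<in>{1..n}. top_pref X (Q j) < x} \<le> 1" by simp
  moreover have "card {k\<in>{1..n-1}. alpha k < x} \<le> card ({1..n-1} - {hi})"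
    using assms(6) by (intro card_mono) auto
  then have "card {k\<in>{1..n-1}. alpha k < x} \<le> n - 2" using assms(5) by simp
  moreover have "2 \<le> n" using assms(5) by auto
  ultimately show "x \<le> mvs n X alpha Q" by (simp add: le_mvs_iff)
qed

definition pref_with_top :: "nat set \<Rightarrow> nat \<Rightarrow> (nat \<times> nat) set" where
  "pref_with_top X t = {(u, v). u \<in> X \<and> v \<in> X \<and> v \<noteq> t \<and> (u = t \<or> u < v)}"

lemma pref_with_top_in_prefs: "pref_with_top X t \<in> prefs X"
  unfolding prefs_def pref_with_top_def strict_linear_order_on_def trans_def irrefl_def total_on_def
  by auto

lemma top_pref_pref_with_top:
  assumes "t \<in> X"
  shows "top_pref X (pref_with_top X t) = t"
  unfolding top_pref_def
proof (rule the_equality)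
  show "t \<in> X \<and> (\<forall>y\<in>X. y \<noteq> t \<longrightarrow> (t, y) \<in> pref_with_top X t)"
    using assms unfolding pref_with_top_def by auto
next
  fix x assume "x \<in> X \<and> (\<forall>y\<in>X. y \<noteq> x \<longrightarrow> (x, y) \<in> pref_with_top X t)"
  thus "x = t" using assms unfolding pref_with_top_def by auto
qed

lemma le_option_set_if_top_and_ballots_ge:
  assumes "y \<in> option_set n X alpha i Pi" "i \<in> {1..n}"
    and "m \<le> top_pref X Pi" "\<forall>k\<in>{1..n-1}. m \<le> alpha k"
  shows "m \<le> y"
  using assms le_mvs_if_voter_and_ballots_ge[of i n m X] unfolding option_set_def by auto

lemma option_set_le_if_top_and_ballots_le:
  assumes "y \<in> option_set n X alpha i Pi" "i \<in> {1..n}"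
    and "top_pref X Pi \<le> m" "\<forall>k\<in>{1..n-1}. alpha k \<le> m"
  shows "y \<le> m"
  using assms mvs_le_if_voter_and_ballots_le[of i n X] unfolding option_set_def by auto

lemma mem_option_set_if_ballots_around:
  assumes "Pi \<in> prefs X" "x \<in> X" "i \<in> {1..n}"
    and "lo \<in> {1..n-1}" "alpha lo \<le> x" "hi \<in> {1..n-1}" "x \<le> alpha hi"
  shows "x \<in> option_set n X alpha i Pi"
proof -
  define Q where "Q = (\<lambda>j. if j = i then Pi else pref_with_top X x)"
  have "Q \<in> profiles n X"
    using assms(1) pref_with_top_in_prefs unfolding Q_def profiles_def by auto
  moreover have "\<forall>j\<in>{1..n} - {i}. top_pref X (Q j) = x"
    using top_pref_pref_with_top[OF assms(2)] unfolding Q_def by simp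
  then have "mvs n X alpha Q = x"
    using mvs_eq_if_others_agree assms(3-7) by blast
  ultimately show ?thesis unfolding option_set_def Q_def by force
qed

theorem lemma1:
  fixes n a b i x :: nat and alpha :: "nat \<Rightarrow> nat"
  assumes "n \<ge> 2" and "a < b"
    and "\<forall>k\<in>{1..n-1}. alpha k \<in> {a..b}"
    and "\<forall>k\<in>{1..n-1}. \<forall>l\<in>{1..n-1}. k \<le> l \<longrightarrow> alpha k \<le> alpha l"
    and "i \<in> {1..n}"
    and "x \<in> {a..b}"
  shows "x \<in> veto_set n {a..b} alpha i \<longleftrightarrow> (x < alpha 1 \<or> x > alpha (n-1))"
proof -
  have ends: "1 \<in> {1..n-1}" "n - 1 \<in> {1..n-1}" using assms(1) by auto
  have no_veto: "x \<in> option_set n {a..b} alpha i Pi"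
    if "Pi \<in> prefs {a..b}" "alpha 1 \<le> x" "x \<le> alpha (n-1)" for Pi
    using mem_option_set_if_ballots_around that assms(5,6) ends by blast
  have top_b: "alpha 1 \<le> y" if "y \<in> option_set n {a..b} alpha i (pref_with_top {a..b} b)" for y
    using le_option_set_if_top_and_ballots_ge[OF that assms(5)] top_pref_pref_with_top[of b]
      assms(2-4) ends by auto
  have top_a: "y \<le> alpha (n-1)" if "y \<in> option_set n {a..b} alpha i (pref_with_top {a..b} a)" for y
    using option_set_le_if_top_and_ballots_le[OF that assms(5)] top_pref_pref_with_top[of a]
      assms(2-4) ends by auto
  show ?thesis
  proof
    assume "x \<in> veto_set n {a..b} alpha i"
    then obtain Pi where "Pi \<in> prefs {a..b}" "x \<notin> option_set n {a..b} alpha i Pi"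
      unfolding veto_set_def by blast
    with no_veto show "x < alpha 1 \<or> x > alpha (n-1)" by (meson not_le)
  next
    assume "x < alpha 1 \<or> x > alpha (n-1)"
    then have "x \<notin> option_set n {a..b} alpha i (pref_with_top {a..b} b) \<or>
        x \<notin> option_set n {a..b} alpha i (pref_with_top {a..b} a)"
      using top_b top_a by (meson not_le)
    then show "x \<in> veto_set n {a..b} alpha i"
      using assms(6) pref_with_top_in_prefs unfolding veto_set_def by blast
  qed
qed

end
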